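(* Let $n\in\mathbb N$, let $f=\sum_{j\ge0}a_jz^j$ be extremal for $M_n$ with $f(0)>0$, and write $\log f=\sum_{j\ge0}b_jz^j$ for a holomorphic logarithm of $f$. Let $P(z)=a_n+2\sum_{j=1}^na_{n-j}z^j$. If $\mathrm{Re}\,P$ vanishes at $n$ distinct points of $\partial\mathbb D$, then $|b_j|\le 2n/j$ for $1\le j\le n$. In particular $|b_n|\le2$, with equality if and only if these $n$ zeros of $\mathrm{Re}\,P$ are equidistributed on $\partial\mathbb D$ (i.e. they form the set $\{\omega e^{2\pi ik/n}:k=1,\dots,n\}$ for some $\omega\in\partial\mathbb D$).
   Context: $\mathbb D$ is the open unit disc; $\mathcal B_0=\{f$ holomorphic on $\mathbb D: 0<|f|\le1\}$; $M_n(f)=\mathrm{Re}\,a_n$; $f\in\mathcal B_0$ is extremal for $M_n$ if $M_n(f)\ge M_n(F)$ for all $F\in\mathcal B_0$. *)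

theory Defs
  imports "HOL-Complex_Analysis.Complex_Analysis"
begin

definition taylor_coef :: "(complex \<Rightarrow> complex) \<Rightarrow> nat \<Rightarrow> complex" where
  "taylor_coef f j = (deriv ^^ j) f 0 / of_nat (fact j)"

definition B0 :: "(complex \<Rightarrow> complex) set" where
  "B0 = {f. f holomorphic_on ball 0 1 \<and> (\<forall>z\<in>ball 0 1. 0 < norm (f z) \<and> norm (f z) \<le> 1)}"

definition M :: "nat \<Rightarrow> (complex \<Rightarrow> complex) \<Rightarrow> real" where
  "M n f = Re (taylor_coef f n)"

definition extremal :: "nat \<Rightarrow> (complex \<Rightarrow> complex) \<Rightarrow> bool" where
  "extremal n f \<longleftrightarrow> f \<in> B0 \<and> (\<forall>F\<in>B0. M n F \<le> M n f)"

end

theory Submission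
  imports Defs "HOL-Computational_Algebra.Polynomial_FPS"
begin

text \<open>
  Rotating an extremal f by conj(a_n)/|a_n| shows that a_n is real, and multiplying it by (1 + v)/2,
  where v(z) = (s - zeta z)/(1 - s zeta z) is a disc automorphism, shows Re P >= 0 on the unit
  circle in the limit s -> 1. The polynomial R of degree 2n with coefficients a_0, ..., a_n,
  conj a_(n-1), ..., conj a_0 satisfies R(conj w) = conj w^n Re P(w) for |w| = 1, so every zero zeta
  of Re P on the circle is a minimum of Re P and conj zeta is a double root of R. Counting degrees,
  R = c prod_(zeta in Z) (z - conj zeta)^2. As R agrees with f up to order n, the logarithmic
  derivatives g' = f'/f and R'/R agree up to order n - 1, which gives j b_j = -2 sum_(zeta in Z) zeta^j.
  The bounds follow from the triangle inequality, with equality for j = n iff all zeta^n coincide,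
  i.e. iff Z is a rotated copy of the set of n-th roots of unity.
\<close>

section \<open>Variations of an extremal function\<close>

lemma taylor_coef_eq_fps_nth:
  "f has_fps_expansion F \<Longrightarrow> taylor_coef f k = fps_nth F k"
  by (simp add: taylor_coef_def fps_nth_fps_expansion)

lemma B0_has_fps_expansion: "f \<in> B0 \<Longrightarrow> f has_fps_expansion fps_expansion f 0"
  unfolding B0_def by (intro has_fps_expansion_fps_expansion[of "ball 0 1"]) auto

lemma B0_mult:
  assumes "f \<in> B0" "h holomorphic_on ball 0 1"
    and "\<And>z. z \<in> ball 0 1 \<Longrightarrow> 0 < norm (h z) \<and> norm (h z) \<le> 1"
  shows "(\<lambda>z. f z * h z) \<in> B0"
  using assms unfolding B0_def
  by (auto simp: norm_mult intro!: holomorphic_intros mult_le_one)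

lemma extremal_coef_real:
  assumes "extremal n f"
  shows "Im (taylor_coef f n) = 0"
proof (cases "taylor_coef f n = 0")
  case False
  define a where "a = taylor_coef f n"
  define c where "c = cnj a / of_real (norm a)"
  have fB: "f \<in> B0" using assms by (simp add: extremal_def)
  have "norm c = 1" using False by (simp add: c_def a_def norm_divide)
  then have "(\<lambda>z. f z * c) \<in> B0" by (intro B0_mult[OF fB]) auto
  with assms have "M n (\<lambda>z. f z * c) \<le> M n f" by (simp add: extremal_def)
  moreover have "taylor_coef (\<lambda>z. f z * c) n = a * c"
    using taylor_coef_eq_fps_nth[OF has_fps_expansion_cmult_right[OF B0_has_fps_expansion[OF fB]]]
      taylor_coef_eq_fps_nth[OF B0_has_fps_expansion[OF fB]]
    by (simp add: a_def)
  moreover have "a * c = of_real (norm a)"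
    using False complex_norm_square[of a] by (simp add: c_def a_def field_simps power2_eq_square)
  ultimately have "norm a \<le> Re a" unfolding M_def a_def by (metis Re_complex_of_real)
  then have "(Re a)\<^sup>2 + (Im a)\<^sup>2 \<le> (Re a)\<^sup>2"
    by (metis cmod_power2 norm_ge_zero power_mono)
  then show ?thesis by (simp add: a_def)
qed simp

lemma norm_diff_lt_norm_one_minus_mult:
  fixes s :: real and w :: complex
  assumes "\<bar>s\<bar> < 1" "norm w < 1"
  shows "norm (of_real s - w) < norm (1 - of_real s * w)"
proof -
  have "0 < (1 - s\<^sup>2) * (1 - (norm w)\<^sup>2)"
    using assms by (intro mult_pos_pos) (auto simp: abs_square_less_1 power_less_one_iff)
  moreover have "(norm (of_real s - w))\<^sup>2 = (s - Re w)\<^sup>2 + (Im w)\<^sup>2"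
    and "(norm (1 - of_real s * w))\<^sup>2 = (1 - s * Re w)\<^sup>2 + (s * Im w)\<^sup>2"
    and "(norm w)\<^sup>2 = (Re w)\<^sup>2 + (Im w)\<^sup>2"
    by (simp_all add: cmod_power2)
  ultimately have "(norm (of_real s - w))\<^sup>2 < (norm (1 - of_real s * w))\<^sup>2"
    by (simp add: power2_eq_square algebra_simps)
  then show ?thesis by (rule power_less_imp_less_base) simp
qed

definition blaschke :: "complex \<Rightarrow> complex \<Rightarrow> complex \<Rightarrow> complex" where
  "blaschke c \<zeta> z = (c - \<zeta> * z) / (1 - c * \<zeta> * z)"

lemma blaschke_in_disc:
  fixes s :: real
  assumes "\<bar>s\<bar> < 1" "norm \<zeta> = 1" "norm z < 1"
  shows "1 - of_real s * \<zeta> * z \<noteq> 0" and "norm (blaschke (of_real s) \<zeta> z) < 1"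
proof -
  have "norm (\<zeta> * z) < 1" using assms(2,3) by (simp add: norm_mult)
  then have lt: "norm (of_real s - \<zeta> * z) < norm (1 - of_real s * \<zeta> * z)"
    using assms(1) norm_diff_lt_norm_one_minus_mult[of s "\<zeta> * z"] by (simp add: mult.assoc)
  then show "1 - of_real s * \<zeta> * z \<noteq> 0" by auto
  with lt show "norm (blaschke (of_real s) \<zeta> z) < 1"
    by (simp add: blaschke_def norm_divide divide_less_eq)
qed

lemma blaschke_has_fps_expansion:
  fixes c \<zeta> :: complex
  defines "B \<equiv> Abs_fps (\<lambda>m. if m = 0 then c else \<zeta> ^ m * c ^ (m - 1) * (c\<^sup>2 - 1))"
  shows "blaschke c \<zeta> has_fps_expansion B"
proof -
  define D where "D = 1 - fps_const (c * \<zeta>) * fps_X"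
  have "blaschke c \<zeta> has_fps_expansion (fps_const c - fps_const \<zeta> * fps_X) / D"
    unfolding D_def blaschke_def[abs_def]
    by (intro has_fps_expansion_divide' has_fps_expansion_diff has_fps_expansion_const
        has_fps_expansion_1 has_fps_expansion_cmult_left has_fps_expansion_fps_X) simp
  also have "fps_const c - fps_const \<zeta> * fps_X = B * D"
  proof (rule fps_ext)
    fix m
    have "B * D = B - fps_const (c * \<zeta>) * (fps_X * B)"
      by (simp add: D_def right_diff_distrib mult.left_commute)
    then have "fps_nth (B * D) m = fps_nth B m - (if m = 0 then 0 else c * \<zeta> * fps_nth B (m - 1))"
      by simp
    moreover consider "m = 0" | "m = 1" | k where "m = Suc (Suc k)"
      by (metis One_nat_def not0_implies_Suc)
    then have "fps_nth B m - (if m = 0 then 0 else c * \<zeta> * fps_nth B (m - 1))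
               = fps_nth (fps_const c - fps_const \<zeta> * fps_X) m"
    proof cases
      case 1
      then show ?thesis by (simp add: B_def)
    next
      case 2
      then show ?thesis by (simp add: B_def power2_eq_square algebra_simps)
    next
      case 3
      then show ?thesis by (simp add: B_def mult_ac)
    qed
    ultimately show "fps_nth (fps_const c - fps_const \<zeta> * fps_X) m = fps_nth (B * D) m"
      by simp
  qed
  also have "fps_nth D 0 = 1"
    by (simp add: D_def)
  then have "B * D / D = B"
    by (intro nonzero_mult_div_cancel_right) auto
  finally show ?thesis .
qed

lemma B0_mult_blaschke_average:
  fixes s :: real
  assumes "f \<in> B0" "\<bar>s\<bar> < 1" "norm \<zeta> = 1"
  shows "(\<lambda>z. f z * ((1 + blaschke (of_real s) \<zeta> z) / 2)) \<in> B0"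
proof (rule B0_mult[OF assms(1)])
  show "(\<lambda>z. (1 + blaschke (of_real s) \<zeta> z) / 2) holomorphic_on ball 0 1"
    using blaschke_in_disc(1)[OF assms(2,3)] unfolding blaschke_def
    by (auto intro!: holomorphic_intros)
  fix z :: complex
  assume "z \<in> ball 0 1"
  then have lt: "norm (blaschke (of_real s) \<zeta> z) < 1"
    using blaschke_in_disc(2)[OF assms(2,3)] by simp
  then have "1 + blaschke (of_real s) \<zeta> z \<noteq> 0"
    by (metis add_eq_0_iff norm_minus_cancel norm_one order.irrefl)
  with lt show "0 < norm ((1 + blaschke (of_real s) \<zeta> z) / 2) \<and> norm ((1 + blaschke (of_real s) \<zeta> z) / 2) \<le> 1"
    using norm_triangle_ineq[of 1 "blaschke (of_real s) \<zeta> z"] by simp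
qed

lemma taylor_coef_mult_blaschke_average:
  fixes s :: real
  assumes "f has_fps_expansion F"
  shows "taylor_coef (\<lambda>z. f z * ((1 + blaschke (of_real s) \<zeta> z) / 2)) n
           = of_real ((1 + s) / 2) * taylor_coef f n
             + of_real ((s\<^sup>2 - 1) / 2) * (\<Sum>j=1..n. taylor_coef f (n - j) * \<zeta> ^ j * of_real s ^ (j - 1))"
proof -
  define a where "a = taylor_coef f"
  define U where "U = Abs_fps (\<lambda>m. if m = 0 then of_real ((1 + s) / 2)
                                    else of_real ((s\<^sup>2 - 1) / 2) * (\<zeta> ^ m * of_real s ^ (m - 1)))"
  have "(\<lambda>z. (1 + blaschke (of_real s) \<zeta> z) * (1 / 2)) has_fps_expansion
          (1 + Abs_fps (\<lambda>m. if m = 0 then of_real s else \<zeta> ^ m * of_real s ^ (m - 1) * ((of_real s)\<^sup>2 - 1)))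
          * fps_const (1 / 2)"
    by (intro has_fps_expansion_cmult_right has_fps_expansion_add
        has_fps_expansion_1 blaschke_has_fps_expansion)
  also have "\<dots> = U"
  proof (rule fps_ext)
    fix m
    show "fps_nth \<dots> m = fps_nth U m"
      by (cases "m = 0") (simp_all add: U_def power2_eq_square algebra_simps)
  qed
  finally have "(\<lambda>z. (1 + blaschke (of_real s) \<zeta> z) / 2) has_fps_expansion U"
    by simp
  then have "(\<lambda>z. f z * ((1 + blaschke (of_real s) \<zeta> z) / 2)) has_fps_expansion F * U"
    by (rule has_fps_expansion_mult[OF assms])
  then have "taylor_coef (\<lambda>z. f z * ((1 + blaschke (of_real s) \<zeta> z) / 2)) n = fps_nth (F * U) n"
    by (rule taylor_coef_eq_fps_nth)
  also have "\<dots> = (\<Sum>j=0..n. a (n - j) * fps_nth U j)"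
    by (simp add: fps_mult_nth a_def taylor_coef_eq_fps_nth[OF assms])
       (subst sum.atLeastAtMost_rev, simp)
  also have "\<dots> = a n * fps_nth U 0 + (\<Sum>j=1..n. a (n - j) * fps_nth U j)"
    by (simp add: sum.atLeast_Suc_atMost)
  also have "\<dots> = of_real ((1 + s) / 2) * a n
                  + of_real ((s\<^sup>2 - 1) / 2) * (\<Sum>j=1..n. a (n - j) * \<zeta> ^ j * of_real s ^ (j - 1))"
    unfolding sum_distrib_left by (simp add: U_def algebra_simps)
  finally show ?thesis by (simp add: a_def)
qed

lemma extremal_blaschke_variation_ineq:
  fixes s :: real
  assumes "extremal n f" "norm \<zeta> = 1" "\<bar>s\<bar> < 1"
  shows "0 \<le> Re (taylor_coef f n)
           + (s + 1) * Re (\<Sum>j=1..n. taylor_coef f (n - j) * \<zeta> ^ j * of_real s ^ (j - 1))"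
proof -
  define W where "W = (\<Sum>j=1..n. taylor_coef f (n - j) * \<zeta> ^ j * of_real s ^ (j - 1))"
  have "f \<in> B0" using assms(1) by (simp add: extremal_def)
  then have "(\<lambda>z. f z * ((1 + blaschke (of_real s) \<zeta> z) / 2)) \<in> B0"
    using assms(2,3) by (intro B0_mult_blaschke_average)
  with assms(1) have "M n (\<lambda>z. f z * ((1 + blaschke (of_real s) \<zeta> z) / 2)) \<le> M n f"
    by (simp add: extremal_def)
  then have "(1 + s) / 2 * Re (taylor_coef f n) + (s\<^sup>2 - 1) / 2 * Re W \<le> Re (taylor_coef f n)"
    using taylor_coef_mult_blaschke_average[OF B0_has_fps_expansion[OF \<open>f \<in> B0\<close>]]
    by (simp add: M_def W_def)
  then have "(s - 1) * (Re (taylor_coef f n) + (s + 1) * Re W) \<le> 0"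
    by (simp add: power2_eq_square algebra_simps divide_simps)
  moreover have "s < 1" using assms(3) by simp
  ultimately show ?thesis
    by (simp add: mult_le_0_iff W_def)
qed

lemma extremal_Re_P_nonneg_on_circle:
  assumes "extremal n f" "norm \<zeta> = 1"
  shows "0 \<le> Re (taylor_coef f n + 2 * (\<Sum>j=1..n. taylor_coef f (n - j) * \<zeta> ^ j))"
proof -
  define \<phi> where "\<phi> = (\<lambda>s::real. Re (taylor_coef f n)
     + (s + 1) * Re (\<Sum>j=1..n. taylor_coef f (n - j) * \<zeta> ^ j * of_real s ^ (j - 1)))"
  have "(\<phi> \<longlongrightarrow> \<phi> 1) (at_left 1)"
    unfolding \<phi>_def by (intro tendsto_intros)
  moreover have "eventually (\<lambda>s. s \<in> {0<..<1::real}) (at_left 1)"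
    by (rule eventually_at_left_real) simp
  then have "eventually (\<lambda>s. 0 \<le> \<phi> s) (at_left 1)"
    by eventually_elim (use extremal_blaschke_variation_ineq[OF assms] in \<open>simp add: \<phi>_def\<close>)
  ultimately have "0 \<le> \<phi> 1"
    by (intro tendsto_lowerbound) auto
  then show ?thesis by (simp add: \<phi>_def)
qed

section \<open>The reflected polynomial\<close>

definition reflected_poly :: "nat \<Rightarrow> (nat \<Rightarrow> complex) \<Rightarrow> complex poly" where
  "reflected_poly n a = (\<Sum>i\<le>2 * n. monom (if i \<le> n then a i else cnj (a (2 * n - i))) i)"

lemma coeff_reflected_poly:
  "coeff (reflected_poly n a) i =
     (if i \<le> n then a i else if i \<le> 2 * n then cnj (a (2 * n - i)) else 0)"
  by (simp add: reflected_poly_def coeff_sum coeff_monom)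

lemma degree_reflected_poly:
  assumes "a 0 \<noteq> 0"
  shows "degree (reflected_poly n a) = 2 * n"
proof (rule antisym)
  show "degree (reflected_poly n a) \<le> 2 * n"
    by (rule degree_le) (simp add: coeff_reflected_poly)
  show "2 * n \<le> degree (reflected_poly n a)"
    by (rule le_degree) (use assms in \<open>simp add: coeff_reflected_poly\<close>)
qed

lemma reflected_poly_nonzero: "a 0 \<noteq> 0 \<Longrightarrow> reflected_poly n a \<noteq> 0"
  by (metis coeff_0 coeff_reflected_poly zero_le)

lemma poly_reflected_poly_cnj:
  assumes "norm w = 1" "Im (a n) = 0"
  shows "poly (reflected_poly n a) (cnj w)
           = cnj w ^ n * of_real (Re (a n + 2 * (\<Sum>j=1..n. a (n - j) * w ^ j)))"
proof -
  define y where "y = cnj w"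
  define S where "S = (\<Sum>j=1..n. a (n - j) * w ^ j)"
  define d where "d i = (if i \<le> n then a i else cnj (a (2 * n - i))) * y ^ i" for i
  have yw: "y * w = 1"
    using assms(1) complex_norm_square[of w] by (simp add: y_def mult.commute)
  have y_pow: "y ^ n * w ^ j = y ^ (n - j)" if "j \<le> n" for j
  proof -
    have "y ^ n * w ^ j = y ^ (n - j) * (y * w) ^ j"
      using that by (simp add: power_mult_distrib flip: power_add mult.assoc)
    then show ?thesis using yw by simp
  qed
  have "{..2 * n} = {..<n} \<union> ({n} \<union> {Suc n..n + n})" "{..<n} \<inter> {Suc n..n + n} = {}"
    by auto
  then have "(\<Sum>i\<le>2 * n. d i) = (\<Sum>i<n. d i) + (d n + (\<Sum>i=Suc n..n + n. d i))"
    by (simp add: sum.union_disjoint)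
  also have "(\<Sum>i<n. d i) = (\<Sum>i<n. d (n - Suc i))"
    by (rule sum.nat_diff_reindex[symmetric])
  also have "\<dots> = (\<Sum>j=1..n. d (n - j))"
    by (simp add: sum.atLeast1_atMost_eq)
  also have "\<dots> = y ^ n * S"
    unfolding S_def sum_distrib_left
    by (intro sum.cong) (auto simp: d_def y_pow[symmetric] mult.left_commute)
  also have "(\<Sum>i=Suc n..n + n. d i) = (\<Sum>j=1..n. d (j + n))"
    using sum.shift_bounds_cl_nat_ivl[of d 1 n n] by (simp add: add.commute)
  also have "\<dots> = y ^ n * cnj S"
    unfolding S_def cnj_sum sum_distrib_left
    by (intro sum.cong) (auto simp: d_def y_def power_add mult_2 mult.left_commute)
  finally have "poly (reflected_poly n a) y = y ^ n * (a n + S + cnj S)"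
    by (simp add: reflected_poly_def poly_sum poly_monom d_def algebra_simps)
  moreover have "a n + S + cnj S = of_real (Re (a n + 2 * S))"
    using assms(2) by (simp add: complex_eq_iff)
  ultimately show ?thesis by (simp add: y_def S_def)
qed

lemma poly_reflected_poly_rotate:
  assumes "norm \<zeta> = 1" "Im (a n) = 0"
  shows "poly (reflected_poly n a) (cnj \<zeta> * exp (- \<i> * of_real t)) * (\<zeta> ^ n * exp (\<i> * of_nat n * of_real t))
           = of_real (Re (a n + 2 * (\<Sum>j=1..n. a (n - j) * (\<zeta> * exp (\<i> * of_real t)) ^ j)))"
proof -
  define w where "w = \<zeta> * exp (\<i> * of_real t)"
  have "norm w = 1" using assms(1) by (simp add: w_def norm_mult)
  have cw: "cnj w = cnj \<zeta> * exp (- \<i> * of_real t)" by (simp add: w_def exp_cnj)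
  have wn: "w ^ n = \<zeta> ^ n * exp (\<i> * of_nat n * of_real t)"
    by (simp add: w_def power_mult_distrib exp_of_nat_mult[symmetric] algebra_simps)
  have "poly (reflected_poly n a) (cnj \<zeta> * exp (- \<i> * of_real t)) * (\<zeta> ^ n * exp (\<i> * of_nat n * of_real t))
          = poly (reflected_poly n a) (cnj w) * w ^ n"
    unfolding cw wn ..
  also have "\<dots> = (cnj w * w) ^ n * of_real (Re (a n + 2 * (\<Sum>j=1..n. a (n - j) * w ^ j)))"
    using poly_reflected_poly_cnj[of w a n, OF \<open>norm w = 1\<close> assms(2)] by (simp add: power_mult_distrib)
  also have "cnj w * w = 1"
    using \<open>norm w = 1\<close> complex_norm_square[of w] by (simp add: mult.commute)
  finally show ?thesis by (simp add: w_def)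
qed

lemma has_field_derivative_zero_if_real_nonneg:
  fixes h :: "complex \<Rightarrow> complex"
  assumes "(h has_field_derivative D) (at 0)" "h 0 = 0"
    and "\<And>t::real. Im (h (of_real t)) = 0" "\<And>t::real. 0 \<le> Re (h (of_real t))"
  shows "D = 0"
proof -
  have vd: "((\<lambda>t. h (of_real t)) has_vector_derivative D) (at 0)"
    using has_vector_derivative_real_field[of h D 0] assms(1) by simp
  have "((\<lambda>t. Re (h (of_real t))) has_real_derivative Re D) (at 0)"
    using vd by (rule has_field_derivative_Re)
  then have "Re D = 0"
    by (rule DERIV_local_min[of _ _ _ 1]) (use assms in auto)
  moreover have "((\<lambda>t. Im (h (of_real t))) has_real_derivative Im D) (at 0)"
    using vd by (simp add: has_vector_derivative_complex_iff)
  then have "Im D = 0"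
    using assms(3) DERIV_unique[OF _ DERIV_const] by simp
  ultimately show ?thesis by (simp add: complex_eq_iff)
qed

lemma order_ge_2_if_double_root:
  fixes p :: "'a::{idom, ring_char_0} poly"
  assumes "p \<noteq> 0" "poly p x = 0" "poly (pderiv p) x = 0"
  shows "2 \<le> order x p"
proof -
  have "pderiv p \<noteq> 0"
  proof
    assume "pderiv p = 0"
    then obtain c where "p = [:c:]" by (metis pderiv_eq_0_iff degree_eq_zeroE)
    with assms(1,2) show False by simp
  qed
  then have "0 < order x (pderiv p)" using assms(3) order_gt_0_iff by blast
  then show ?thesis using order_pderiv[OF assms(1,2)] by simp
qed

lemma reflected_poly_double_root:
  assumes "Im (a n) = 0" "a 0 \<noteq> 0"
    and nonneg: "\<And>w. norm w = 1 \<Longrightarrow> 0 \<le> Re (a n + 2 * (\<Sum>j=1..n. a (n - j) * w ^ j))"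
    and "norm \<zeta> = 1" and zero: "Re (a n + 2 * (\<Sum>j=1..n. a (n - j) * \<zeta> ^ j)) = 0"
  shows "2 \<le> order (cnj \<zeta>) (reflected_poly n a)"
proof -
  define R where "R = reflected_poly n a"
  define ReP where "ReP w = Re (a n + 2 * (\<Sum>j=1..n. a (n - j) * w ^ j))" for w
  have "poly R (cnj \<zeta>) = cnj \<zeta> ^ n * of_real (ReP \<zeta>)"
    using poly_reflected_poly_cnj[of \<zeta> a n, OF assms(4,1)] by (simp add: R_def ReP_def)
  moreover have "ReP \<zeta> = 0" unfolding ReP_def by (rule zero)
  ultimately have root: "poly R (cnj \<zeta>) = 0" by simp
  \<comment> \<open>h is real, nonnegative and zero at 0, and h'(0) is a nonzero multiple of R'(conj zeta)\<close>
  define h where "h t = poly R (cnj \<zeta> * exp (- \<i> * t)) * (\<zeta> ^ n * exp (\<i> * of_nat n * t))" for t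
  have "((\<lambda>t. cnj \<zeta> * exp (- \<i> * t)) has_field_derivative cnj \<zeta> * (- \<i>)) (at 0)"
    by (rule derivative_eq_intros refl | simp)+
  from DERIV_chain2[OF poly_DERIV this]
  have "((\<lambda>t. poly R (cnj \<zeta> * exp (- \<i> * t))) has_field_derivative
          poly (pderiv R) (cnj \<zeta>) * (cnj \<zeta> * (- \<i>))) (at 0)"
    by simp
  moreover have "((\<lambda>t. \<zeta> ^ n * exp (\<i> * of_nat n * t)) has_field_derivative \<zeta> ^ n * (\<i> * of_nat n)) (at 0)"
    by (rule derivative_eq_intros refl | simp)+
  ultimately have deriv: "(h has_field_derivative poly (pderiv R) (cnj \<zeta>) * (cnj \<zeta> * (- \<i>)) * \<zeta> ^ n) (at 0)"
    using DERIV_mult root unfolding h_def by fastforce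
  have h_real: "h (of_real t) = of_real (ReP (\<zeta> * exp (\<i> * of_real t)))" for t :: real
    unfolding h_def R_def ReP_def by (rule poly_reflected_poly_rotate[of \<zeta> a n, OF assms(4,1)])
  have "poly (pderiv R) (cnj \<zeta>) * (cnj \<zeta> * (- \<i>)) * \<zeta> ^ n = 0"
  proof (rule has_field_derivative_zero_if_real_nonneg[OF deriv])
    show "h 0 = 0" by (simp add: h_def root)
    show "Im (h (of_real t)) = 0" for t by (simp add: h_real)
    show "0 \<le> Re (h (of_real t))" for t
      unfolding h_real Re_complex_of_real ReP_def by (rule nonneg) (simp add: norm_mult assms(4))
  qed
  then have "poly (pderiv R) (cnj \<zeta>) = 0"
    using assms(4) by auto
  with root show ?thesis
    unfolding R_def by (intro order_ge_2_if_double_root reflected_poly_nonzero assms(2))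
qed

lemma prod_power_dvd_if_order_ge:
  fixes p :: "'a::idom poly"
  assumes "finite A" "p \<noteq> 0" "\<And>a. a \<in> A \<Longrightarrow> k \<le> order a p"
  shows "(\<Prod>a\<in>A. [:-a, 1:] ^ k) dvd p"
  using assms(1,3)
proof (induction A rule: finite_induct)
  case (insert b A)
  then obtain q where q: "p = (\<Prod>a\<in>A. [:-a, 1:] ^ k) * q" by blast
  with assms(2) have "q \<noteq> 0" by auto
  have "poly (\<Prod>a\<in>A. [:-a, 1:] ^ k) b \<noteq> 0"
    using insert by (auto simp: poly_prod)
  then have "order b q = order b p"
    using order_mult[of "\<Prod>a\<in>A. [:-a, 1:] ^ k" q b] assms(2) q by (simp add: order_0I)
  with insert \<open>q \<noteq> 0\<close> have "[:-b, 1:] ^ k dvd q"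
    by (simp add: order_divides)
  with q insert show ?case
    by (simp add: mult.commute mult_dvd_mono)
qed simp

lemma degree_prod_power_linear:
  fixes A :: "'a::idom set"
  shows "degree (\<Prod>a\<in>A. [:-a, 1:] ^ k) = k * card A"
  by (cases "finite A") (simp_all add: degree_prod_sum_eq degree_power_eq)

lemma dvd_degree_eq_imp_eq_smult:
  fixes p q :: "'a::idom poly"
  assumes "p dvd q" "q \<noteq> 0" "degree p = degree q"
  obtains c where "q = smult c p"
proof -
  obtain r where r: "q = p * r" using assms(1) by blast
  with assms(2) have "degree q = degree p + degree r"
    by (simp add: degree_mult_eq)
  with assms(3) obtain c where "r = [:c:]"
    by (metis add_cancel_left_right degree_eq_zeroE)
  with r show ?thesis using that by simp
qed

section \<open>Logarithmic derivatives of truncated power series\<close>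

lemma fps_X_minus_const_mult_geometric:
  fixes a :: "'a::field"
  assumes "a \<noteq> 0"
  shows "(fps_X - fps_const a) * Abs_fps (\<lambda>m. - (inverse a ^ Suc m)) = 1"
proof (rule fps_ext)
  fix m
  show "fps_nth ((fps_X - fps_const a) * Abs_fps (\<lambda>m. - (inverse a ^ Suc m))) m = fps_nth 1 m"
    using assms by (cases m) (simp_all add: algebra_simps)
qed

lemma fps_deriv_prod_power_linear:
  fixes A :: "'a::field set"
  assumes "finite A" "0 \<notin> A"
  shows "fps_deriv (\<Prod>a\<in>A. (fps_X - fps_const a) ^ k) =
           (\<Prod>a\<in>A. (fps_X - fps_const a) ^ k) * (\<Sum>a\<in>A. of_nat k * Abs_fps (\<lambda>m. - (inverse a ^ Suc m)))"
  using assms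
proof (induction A rule: finite_induct)
  case (insert b A)
  define u where "u = fps_X - fps_const b"
  define e where "e = Abs_fps (\<lambda>m. - (inverse b ^ Suc m))"
  have ue: "u * e = 1"
    using insert fps_X_minus_const_mult_geometric[of b] by (auto simp: u_def e_def)
  have du: "fps_deriv (u ^ k) = u ^ k * (of_nat k * e)"
  proof (cases k)
    case (Suc l)
    have "u ^ k * (of_nat k * e) = of_nat k * u ^ l * (u * e)"
      by (simp only: Suc power_Suc ac_simps)
    also have "\<dots> = of_nat k * u ^ l"
      by (simp add: ue)
    also have "\<dots> = fps_deriv (u ^ k)"
      unfolding fps_deriv_power' Suc by (simp add: u_def)
    finally show ?thesis ..
  qed simp
  have P: "(\<Prod>a\<in>insert b A. (fps_X - fps_const a) ^ k) = u ^ k * (\<Prod>a\<in>A. (fps_X - fps_const a) ^ k)"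
    using insert by (simp add: u_def)
  have S: "(\<Sum>a\<in>insert b A. of_nat k * Abs_fps (\<lambda>m. - (inverse a ^ Suc m)))
      = of_nat k * e + (\<Sum>a\<in>A. of_nat k * Abs_fps (\<lambda>m. - (inverse a ^ Suc m)))"
    using insert by (simp add: e_def)
  have IH: "fps_deriv (\<Prod>a\<in>A. (fps_X - fps_const a) ^ k) =
      (\<Prod>a\<in>A. (fps_X - fps_const a) ^ k) * (\<Sum>a\<in>A. of_nat k * Abs_fps (\<lambda>m. - (inverse a ^ Suc m)))"
    using insert by simp
  show ?case
    unfolding P S fps_deriv_mult du IH by (simp add: algebra_simps)
qed simp

lemma fps_cutoff_mult_cong:
  assumes "fps_cutoff n f = fps_cutoff n f'" "fps_cutoff n g = fps_cutoff n g'"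
  shows "fps_cutoff n (f * g) = fps_cutoff n (f' * g')"
proof -
  have "fps_nth (f * g) k = fps_nth (f' * g') k" if "k < n" for k
  proof -
    have "fps_nth (f * g) k = fps_nth (fps_cutoff n f * fps_cutoff n g) k"
      using that by (simp add: fps_cutoff_left_mult_nth fps_cutoff_right_mult_nth)
    also have "\<dots> = fps_nth (f' * g') k"
      using that assms by (simp add: fps_cutoff_left_mult_nth fps_cutoff_right_mult_nth)
    finally show ?thesis .
  qed
  then show ?thesis by (simp add: fps_cutoff_eq_fps_cutoff_iff)
qed

lemma fps_cutoff_inverse_cong:
  fixes f g :: "'a::field fps"
  assumes "fps_cutoff n f = fps_cutoff n g" "fps_nth f 0 \<noteq> 0"
  shows "fps_cutoff n (inverse f) = fps_cutoff n (inverse g)"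
proof (cases "n = 0")
  case False
  then have "fps_nth g 0 \<noteq> 0"
    using assms by (metis fps_cutoff_nth neq0_conv)
  with assms show ?thesis by (metis fps_cutoff_inverse)
qed simp

lemma fps_cutoff_deriv_cong:
  "fps_cutoff (Suc n) f = fps_cutoff (Suc n) g \<Longrightarrow> fps_cutoff n (fps_deriv f) = fps_cutoff n (fps_deriv g)"
  by (simp add: fps_cutoff_eq_fps_cutoff_iff fps_deriv_nth)

lemma fps_cutoff_log_deriv_cong:
  fixes f g :: "'a::field fps"
  assumes "fps_cutoff (Suc n) f = fps_cutoff (Suc n) g" "fps_nth f 0 \<noteq> 0"
  shows "fps_cutoff n (fps_deriv f * inverse f) = fps_cutoff n (fps_deriv g * inverse g)"
proof -
  have "fps_cutoff n f = fps_cutoff n g"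
    using assms(1) by (simp add: fps_cutoff_eq_fps_cutoff_iff)
  with assms show ?thesis
    by (intro fps_cutoff_mult_cong fps_cutoff_deriv_cong fps_cutoff_inverse_cong)
qed

lemma fps_deriv_exp_comp:
  assumes "open S" "0 \<in> S" "g holomorphic_on S" "\<And>z. z \<in> S \<Longrightarrow> exp (g z) = f z"
    and "f has_fps_expansion F" "g has_fps_expansion G"
  shows "fps_deriv F = fps_deriv G * F"
proof -
  have "deriv f z = deriv g z * f z" if "z \<in> S" for z
  proof -
    have "((\<lambda>z. exp (g z)) has_field_derivative exp (g z) * deriv g z) (at z)"
      using holomorphic_derivI[OF assms(3,1) that] by (auto intro!: derivative_eq_intros)
    then have "(f has_field_derivative exp (g z) * deriv g z) (at z)"
      by (rule has_field_derivative_transform_within_open[OF _ assms(1) that]) (use assms(4) in auto)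
    then show ?thesis
      using assms(4)[OF that] by (simp add: DERIV_imp_deriv mult.commute)
  qed
  then have "eventually (\<lambda>z. deriv f z = deriv g z * f z) (nhds 0)"
    using eventually_nhds_in_open[OF assms(1,2)] by (auto elim: eventually_mono)
  then have "deriv f has_fps_expansion fps_deriv G * F"
    using has_fps_expansion_mult[OF has_fps_expansion_deriv[OF assms(6)] assms(5)]
    by (simp add: has_fps_expansion_cong[OF _ refl])
  then show ?thesis
    using fps_expansion_unique_complex has_fps_expansion_deriv[OF assms(5)] by blast
qed

lemma taylor_coef_log_eq_inverse_power_sum:
  fixes A :: "complex set"
  assumes "g holomorphic_on ball 0 1" "\<forall>z\<in>ball 0 1. exp (g z) = f z" "f has_fps_expansion F"
    and "finite A" "0 \<notin> A"
    and "fps_cutoff (Suc n) F = fps_cutoff (Suc n) (fps_const c * (\<Prod>a\<in>A. (fps_X - fps_const a) ^ k))"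
    and "1 \<le> j" "j \<le> n"
  shows "of_nat j * taylor_coef g j = - of_nat k * (\<Sum>a\<in>A. inverse a ^ j)"
proof -
  define H where "H = fps_const c * (\<Prod>a\<in>A. (fps_X - fps_const a) ^ k)"
  define K where "K = (\<Sum>a\<in>A. of_nat k * Abs_fps (\<lambda>m. - (inverse a ^ Suc m) :: complex))"
  define G where "G = fps_expansion g 0"
  have hG: "g has_fps_expansion G"
    unfolding G_def by (rule has_fps_expansion_fps_expansion[of "ball 0 1"]) (use assms(1) in auto)
  have "fps_nth F 0 = f 0"
    using assms(3) by (auto simp: has_fps_expansion_def eval_fps_at_0 dest: eventually_nhds_x_imp_x)
  then have F0: "fps_nth F 0 \<noteq> 0"
    using assms(2) by (metis centre_in_ball exp_not_eq_zero zero_less_one)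
  have "fps_deriv F = fps_deriv G * F"
    using fps_deriv_exp_comp[OF open_ball _ assms(1) _ assms(3) hG] assms(2) by auto
  then have G_log: "fps_deriv G = fps_deriv F * inverse F"
    using F0 by (simp add: mult.assoc inverse_mult_eq_1')
  have "fps_nth H 0 \<noteq> 0"
    using F0 assms(6) by (metis H_def fps_cutoff_nth zero_less_Suc)
  moreover have "fps_deriv H = H * K"
    by (simp add: H_def K_def fps_deriv_prod_power_linear[OF assms(4,5)] mult.assoc)
  ultimately have H_log: "fps_deriv H * inverse H = K"
    by (metis inverse_mult_eq_1' mult.assoc mult.commute mult_1_right)
  have "fps_cutoff n (fps_deriv G) = fps_cutoff n K"
    using fps_cutoff_log_deriv_cong[OF assms(6)[folded H_def] F0] G_log H_log by simp
  moreover obtain i where j: "j = Suc i" "i < n"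
    using assms(7,8) by (cases j) auto
  ultimately have "fps_nth (fps_deriv G) i = fps_nth K i"
    by (metis fps_cutoff_eq_fps_cutoff_iff)
  then show ?thesis
    by (simp add: j K_def fps_sum_nth sum_distrib_left
        taylor_coef_eq_fps_nth[OF hG] sum_negf add.commute)
qed

section \<open>Power sums of points on the unit circle\<close>

lemma norm_sum_eq_card_imp_eq:
  fixes u :: "'a \<Rightarrow> complex"
  assumes "finite Z" "\<And>z. z \<in> Z \<Longrightarrow> norm (u z) = 1" "norm (\<Sum>z\<in>Z. u z) = card Z" "z \<in> Z"
  shows "u z = (\<Sum>z\<in>Z. u z) / of_nat (card Z)"
proof -
  define c where "c = (\<Sum>z\<in>Z. u z) / of_nat (card Z)"
  have "card Z > 0" using assms(1,4) card_gt_0_iff by blast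
  then have "norm c = 1" using assms(3) by (simp add: c_def norm_divide)
  then have cc: "c * cnj c = 1" using complex_norm_square[of c] by simp
  have le: "Re (u y * cnj c) \<le> 1" if "y \<in> Z" for y
    using complex_Re_le_cmod[of "u y * cnj c"] assms(2)[OF that] \<open>norm c = 1\<close> by (simp add: norm_mult)
  have "(\<Sum>y\<in>Z. Re (u y * cnj c)) = Re ((\<Sum>y\<in>Z. u y) * cnj c)"
    by (simp add: sum_distrib_right Re_sum)
  also have "(\<Sum>y\<in>Z. u y) = of_nat (card Z) * c"
    using \<open>card Z > 0\<close> by (simp add: c_def)
  also have "Re (of_nat (card Z) * c * cnj c) = (\<Sum>y\<in>Z. 1)"
    using cc by (simp add: mult.assoc)
  finally have "(\<Sum>y\<in>Z. 1 - Re (u y * cnj c)) = 0"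
    by (simp add: sum_subtractf)
  then have "\<forall>y\<in>Z. 1 - Re (u y * cnj c) = 0"
    using le by (subst (asm) sum_nonneg_eq_0_iff[OF assms(1)]) auto
  then have "Re (u z * cnj c) = 1"
    using assms(4) by auto
  moreover have "norm (u z * cnj c) = 1"
    using assms(2,4) \<open>norm c = 1\<close> by (simp add: norm_mult)
  ultimately have "u z * cnj c = 1"
    using cmod_power2[of "u z * cnj c"] by (simp add: complex_eq_iff)
  then have "u z * (cnj c * c) = c" by (simp add: mult.assoc[symmetric])
  with cc show ?thesis by (simp add: c_def mult.commute)
qed

lemma nth_roots_eq_rotated_roots_unity:
  fixes \<omega> :: complex
  assumes "1 \<le> n" "\<omega> \<noteq> 0"
  shows "{z. z ^ n = \<omega> ^ n} = {\<omega> * exp (2 * of_real pi * \<i> * of_nat k / of_nat n) | k. k \<in> {1..n}}"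
proof (intro equalityI subsetI)
  fix z assume "z \<in> {z. z ^ n = \<omega> ^ n}"
  then have "(z / \<omega>) ^ n = 1" using assms(2) by (simp add: power_divide)
  then obtain j where j: "j < n" "z / \<omega> = exp (2 * of_real pi * \<i> * of_nat j / of_nat n)"
    using complex_roots_unity[OF assms(1)] by blast
  \<comment> \<open>the library indexes the roots of unity by j < n, the statement by k \<in> {1..n}\<close>
  define k where "k = (if j = 0 then n else j)"
  have "z / \<omega> = exp (2 * of_real pi * \<i> * of_nat k / of_nat n)"
    using j complex_root_unity_eq[OF assms(1), of k j] by (simp add: k_def)
  moreover have "k \<in> {1..n}" using j assms(1) by (auto simp: k_def)
  ultimately show "z \<in> {\<omega> * exp (2 * of_real pi * \<i> * of_nat k / of_nat n) | k. k \<in> {1..n}}"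
    using assms(2) by (auto simp: divide_eq_eq mult.commute)
next
  fix z assume "z \<in> {\<omega> * exp (2 * of_real pi * \<i> * of_nat k / of_nat n) | k. k \<in> {1..n}}"
  then obtain k where "z = \<omega> * exp (2 * of_real pi * \<i> * of_nat k / of_nat n)"
    by blast
  then show "z \<in> {z. z ^ n = \<omega> ^ n}"
    using complex_root_unity[of n k] assms(1) by (simp add: power_mult_distrib)
qed

lemma norm_sum_power_eq_card_iff:
  fixes Z :: "complex set"
  assumes "1 \<le> n" "Z \<subseteq> sphere 0 1" "card Z = n"
  shows "norm (\<Sum>\<zeta>\<in>Z. \<zeta> ^ n) = n \<longleftrightarrow>
           (\<exists>\<omega>. norm \<omega> = 1 \<and> Z = {\<omega> * exp (2 * of_real pi * \<i> * of_nat k / of_nat n) | k. k \<in> {1..n}})"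
proof
  assume eq: "norm (\<Sum>\<zeta>\<in>Z. \<zeta> ^ n) = n"
  have fin: "finite Z" using assms(1,3) by (metis card.infinite not_one_le_zero)
  obtain \<omega> where "\<omega> \<in> Z" using assms(1,3) by (metis card.empty ex_in_conv not_one_le_zero)
  then have "norm \<omega> = 1" using assms(2) by auto
  have unit: "norm (\<zeta> ^ n) = 1" if "\<zeta> \<in> Z" for \<zeta>
    using assms(2) that by (auto simp: norm_power)
  have mean: "\<zeta> ^ n = (\<Sum>\<zeta>\<in>Z. \<zeta> ^ n) / of_nat (card Z)" if "\<zeta> \<in> Z" for \<zeta>
    by (rule norm_sum_eq_card_imp_eq[OF fin unit]) (use eq assms(3) that in auto)
  have "\<zeta> ^ n = \<omega> ^ n" if "\<zeta> \<in> Z" for \<zeta>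
    using mean[OF that] mean[OF \<open>\<omega> \<in> Z\<close>] by simp
  then have "Z \<subseteq> {z. z ^ n = \<omega> ^ n}" by blast
  moreover have "\<omega> ^ n \<noteq> 0" using \<open>norm \<omega> = 1\<close> by auto
  then have "card {z. z ^ n = \<omega> ^ n} = card Z"
    using card_nth_roots assms(1,3) by simp
  ultimately have "Z = {z. z ^ n = \<omega> ^ n}"
    using assms(1) by (intro card_subset_eq finite_nth_roots) auto
  also have "\<dots> = {\<omega> * exp (2 * of_real pi * \<i> * of_nat k / of_nat n) | k. k \<in> {1..n}}"
    using \<open>norm \<omega> = 1\<close> by (intro nth_roots_eq_rotated_roots_unity assms(1)) auto
  finally show "\<exists>\<omega>. norm \<omega> = 1 \<and> Z = {\<omega> * exp (2 * of_real pi * \<i> * of_nat k / of_nat n) | k. k \<in> {1..n}}"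
    using \<open>norm \<omega> = 1\<close> by blast
next
  assume "\<exists>\<omega>. norm \<omega> = 1 \<and> Z = {\<omega> * exp (2 * of_real pi * \<i> * of_nat k / of_nat n) | k. k \<in> {1..n}}"
  then obtain \<omega> where "norm \<omega> = 1"
    and "Z = {\<omega> * exp (2 * of_real pi * \<i> * of_nat k / of_nat n) | k. k \<in> {1..n}}"
    by blast
  moreover have "\<omega> \<noteq> 0" using \<open>norm \<omega> = 1\<close> by auto
  ultimately have "Z = {z. z ^ n = \<omega> ^ n}"
    using nth_roots_eq_rotated_roots_unity[OF assms(1)] by simp
  then have "(\<Sum>\<zeta>\<in>Z. \<zeta> ^ n) = of_nat n * \<omega> ^ n" using assms(3) by simp
  with \<open>norm \<omega> = 1\<close> show "norm (\<Sum>\<zeta>\<in>Z. \<zeta> ^ n) = n" by (simp add: norm_mult norm_power)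
qed

lemma extremal_fps_cutoff_eq_prod:
  assumes "extremal n f" "f 0 \<noteq> 0" "finite Z" "Z \<subseteq> sphere 0 1" "card Z = n"
    and "\<forall>z\<in>Z. Re (taylor_coef f n + 2 * (\<Sum>j=1..n. taylor_coef f (n - j) * z ^ j)) = 0"
  obtains c where "fps_cutoff (Suc n) (fps_expansion f 0)
                     = fps_cutoff (Suc n) (fps_const c * (\<Prod>\<alpha>\<in>cnj ` Z. (fps_X - fps_const \<alpha>) ^ 2))"
proof -
  define a where "a = taylor_coef f"
  define R where "R = reflected_poly n a"
  have a0: "a 0 \<noteq> 0" using assms(2) by (simp add: a_def taylor_coef_def)
  have "2 \<le> order \<alpha> R" if \<alpha>: "\<alpha> \<in> cnj ` Z" for \<alpha>
  proof -
    obtain \<zeta> where "\<zeta> \<in> Z" "\<alpha> = cnj \<zeta>" using \<alpha> by blast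
    have "norm \<zeta> = 1" using \<open>\<zeta> \<in> Z\<close> assms(4) by auto
    show ?thesis
      unfolding R_def a_def \<open>\<alpha> = cnj \<zeta>\<close>
    proof (rule reflected_poly_double_root)
      show "Im (taylor_coef f n) = 0" by (rule extremal_coef_real[OF assms(1)])
      show "taylor_coef f 0 \<noteq> 0" using a0 by (simp add: a_def)
      show "0 \<le> Re (taylor_coef f n + 2 * (\<Sum>j=1..n. taylor_coef f (n - j) * w ^ j))"
        if "norm w = 1" for w
        by (rule extremal_Re_P_nonneg_on_circle[OF assms(1) that])
      show "Re (taylor_coef f n + 2 * (\<Sum>j=1..n. taylor_coef f (n - j) * \<zeta> ^ j)) = 0"
        using assms(6) \<open>\<zeta> \<in> Z\<close> by blast
    qed fact
  qed
  then have "(\<Prod>\<alpha>\<in>cnj ` Z. [:-\<alpha>, 1:] ^ 2) dvd R"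
    using assms(3) reflected_poly_nonzero[of a, OF a0] by (intro prod_power_dvd_if_order_ge) (auto simp: R_def)
  moreover have "R \<noteq> 0"
    using reflected_poly_nonzero[of a, OF a0] by (simp add: R_def)
  moreover have "degree (\<Prod>\<alpha>\<in>cnj ` Z. [:-\<alpha>, 1:] ^ 2) = degree R"
    using degree_reflected_poly[of a, OF a0] assms(5)
    by (simp add: degree_prod_power_linear card_image inj_on_def R_def)
  ultimately obtain c where Rc: "R = smult c (\<Prod>\<alpha>\<in>cnj ` Z. [:-\<alpha>, 1:] ^ 2)"
    by (rule dvd_degree_eq_imp_eq_smult)
  have "fps_cutoff (Suc n) (fps_expansion f 0) = fps_cutoff (Suc n) (fps_of_poly R)"
    by (simp add: fps_cutoff_eq_fps_cutoff_iff R_def coeff_reflected_poly a_def taylor_coef_def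
        fps_expansion_def)
  also have "fps_of_poly R = fps_const c * (\<Prod>\<alpha>\<in>cnj ` Z. (fps_X - fps_const \<alpha>) ^ 2)"
    by (simp add: Rc fps_of_poly_smult fps_of_poly_prod fps_of_poly_power fps_of_poly_linear
        flip: fps_const_neg)
  finally show ?thesis by (rule that)
qed

lemma extremal_log_coef_eq_power_sum:
  assumes "extremal n f" "f 0 \<noteq> 0"
    and "g holomorphic_on ball 0 1" "\<forall>z\<in>ball 0 1. exp (g z) = f z"
    and "finite Z" "Z \<subseteq> sphere 0 1" "card Z = n"
    and "\<forall>z\<in>Z. Re (taylor_coef f n + 2 * (\<Sum>j=1..n. taylor_coef f (n - j) * z ^ j)) = 0"
    and "j \<in> {1..n}"
  shows "of_nat j * taylor_coef g j = - 2 * (\<Sum>\<zeta>\<in>Z. \<zeta> ^ j)"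
proof -
  obtain c where cutoff: "fps_cutoff (Suc n) (fps_expansion f 0)
      = fps_cutoff (Suc n) (fps_const c * (\<Prod>\<alpha>\<in>cnj ` Z. (fps_X - fps_const \<alpha>) ^ 2))"
    using extremal_fps_cutoff_eq_prod[OF assms(1,2,5-8)] .
  have "f \<in> B0" using assms(1) by (simp add: extremal_def)
  moreover have "0 \<notin> cnj ` Z" using assms(6) by auto
  ultimately have "of_nat j * taylor_coef g j = - of_nat 2 * (\<Sum>\<alpha>\<in>cnj ` Z. inverse \<alpha> ^ j)"
    using assms(9) by (intro taylor_coef_log_eq_inverse_power_sum[OF assms(3,4) _ _ _ cutoff]
        B0_has_fps_expansion finite_imageI assms(5)) auto
  also have "(\<Sum>\<alpha>\<in>cnj ` Z. inverse \<alpha> ^ j) = (\<Sum>\<zeta>\<in>Z. \<zeta> ^ j)"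
  proof -
    have "inverse (cnj \<zeta>) = \<zeta>" if "\<zeta> \<in> Z" for \<zeta>
    proof (rule inverse_unique)
      have "norm \<zeta> = 1" using that assms(6) by auto
      then show "cnj \<zeta> * \<zeta> = 1" using complex_norm_square[of \<zeta>] by (simp add: mult.commute)
    qed
    then show ?thesis by (simp add: sum.reindex inj_on_def)
  qed
  finally show ?thesis by simp
qed

theorem corollary5:
  fixes n :: nat and f g :: "complex \<Rightarrow> complex" and Z :: "complex set"
  assumes "n \<ge> 1"
    and "extremal n f"
    and "Im (f 0) = 0" and "Re (f 0) > 0"
    and "g holomorphic_on ball 0 1" and "\<forall>z\<in>ball 0 1. exp (g z) = f z"
    and "Z \<subseteq> sphere 0 1" and "card Z = n"
    and "\<forall>z\<in>Z. Re (taylor_coef f n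
                  + 2 * (\<Sum>j=1..n. taylor_coef f (n - j) * z ^ j)) = 0"
  shows "(\<forall>j\<in>{1..n}. norm (taylor_coef g j) \<le> 2 * real n / real j)
       \<and> norm (taylor_coef g n) \<le> 2
       \<and> (norm (taylor_coef g n) = 2 \<longleftrightarrow>
            (\<exists>\<omega>. norm \<omega> = 1 \<and>
                 Z = {\<omega> * exp (2 * of_real pi * \<i> * of_nat k / of_nat n) | k. k \<in> {1..n}}))"
proof -
  have fin: "finite Z" using assms(1,8) card.infinite by force
  \<comment> \<open>of the normalisation f(0) > 0 only f(0) \<noteq> 0 is needed\<close>
  have "f 0 \<noteq> 0" using assms(4) by auto
  then have coef: "real j * norm (taylor_coef g j) = 2 * norm (\<Sum>\<zeta>\<in>Z. \<zeta> ^ j)" if "j \<in> {1..n}" for j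
    using arg_cong[OF extremal_log_coef_eq_power_sum[OF assms(2) _ assms(5,6) fin assms(7,8,9) that], of norm]
    by (simp add: norm_mult)
  have sum_le: "norm (\<Sum>\<zeta>\<in>Z. \<zeta> ^ j) \<le> real n" for j
    using norm_sum[of "\<lambda>\<zeta>. \<zeta> ^ j" Z] assms(7,8) by (simp add: norm_power subset_iff)
  have bound: "\<forall>j\<in>{1..n}. norm (taylor_coef g j) \<le> 2 * real n / real j"
    using coef sum_le by (auto simp: field_simps)
  have n: "n \<in> {1..n}" using assms(1) by simp
  then have "norm (taylor_coef g n) \<le> 2 * real n / real n"
    using bound by blast
  then have bound_n: "norm (taylor_coef g n) \<le> 2"
    using assms(1) by simp
  have "norm (taylor_coef g n) = 2 \<longleftrightarrow> norm (\<Sum>\<zeta>\<in>Z. \<zeta> ^ n) = n"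
    using coef[OF n] assms(1) by auto
  then show ?thesis
    using bound bound_n norm_sum_power_eq_card_iff[OF assms(1,7,8)] by simp
qed

end
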